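(* Let $M$ be a partially ordered set with smallest element $\theta$, equipped with an $M$-distance $h_M$, and let $\omega\colon M\to M$ be a modulus of continuity. Let $(T,h_T)$ and $(X,h_X)$ be $M$-pseudo metric spaces, $(Y,h_Y)$ an $M$-distance space, and $t\in T$ fixed. Let $h^\omega_T(t_1,t_2)=\omega(h_T(t_1,t_2))$, and let $\Lambda\colon H^\omega(T,X)\to Y$ and a monotone operator $\lambda\colon H^\omega(T,M)\to M$ satisfy $h_Y(\Lambda f(\cdot),\Lambda f(t))\le\lambda(h_X(f(\cdot),f(t)))$ for all $f\in H^\omega(T,X)$. Then for every $f\in H^\omega(T,X)$, $$h_Y(\Lambda f(\cdot),\Lambda f(t))\le \lambda\big(\omega(h_T(\cdot,t))\big).$$ If moreover $\lambda(\theta)=\theta$ and there exist $\phi_X\colon H^\omega(T,M)\to H^\omega(T,X)$ and $\phi_Y\in H(M,Y)$ with $h_Y(\phi_Y(m),\phi_Y(\theta))=m$ for $m=\lambda(\omega(h_T(\cdot,t)))$ and $\Lambda\circ\phi_X=\phi_Y\circ\lambda$, then the inequality becomes an equality for the function $f_{\omega,t}(\cdot)=\phi_X(\omega(h_T(\cdot,t)))$.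
   Context: A partially ordered set $M$ has a reflexive, antisymmetric, transitive relation $\le$ and smallest element $\theta$. For a set $X$, $h_X\colon X\times X\to M$ is an $M$-distance if $h_X(x,x)=\theta$ and $h_X(x,y)=h_X(y,x)$; a fixed $M$-distance $h_M$ on $M$ is given. An $M$-distance $h_X$ is an $M$-pseudo metric if $h_M(h_X(x,x_1),h_X(x,x_2))\le h_X(x_1,x_2)$ for all $x,x_1,x_2$. For $M$-distance spaces, $H(X,Y)=\{f:\ h_Y(f(x_1),f(x_2))\le h_X(x_1,x_2)\ \forall x_1,x_2\}$. A modulus of continuity is $\omega\colon M\to M$ with $\omega(\theta)=\theta$, $\omega$ non-decreasing, and $h_M(\omega(m_1),\omega(m_2))\le\omega(h_M(m_1,m_2))$ for all $m_1,m_2\in M$. For $M$-distance spaces $(T,h_T)$, $(Z,h_Z)$, $H^\omega(T,Z)=\{f\colon T\to Z:\ h_Z(f(t_1),f(t_2))\le\omega(h_T(t_1,t_2))\ \forall t_1,t_2\in T\}$, i.e. the class $H(T,Z)$ with $T$ carrying the $M$-distance $h^\omega_T$. An operator $\lambda\colon H^\omega(T,M)\to M$ is monotone if $u\le v$ pointwise implies $\lambda(u)\le\lambda(v)$. Notation: $\Lambda f(t)$ denotes $\Lambda$ applied to the constant function $\tau\mapsto f(t)$; $\lambda(\theta)$ is $\lambda$ of the constant function $\theta$; $h_T(\cdot,t)$ is $\tau\mapsto h_T(\tau,t)$. *)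

theory Defs
  imports Main
begin

definition M_distance :: "'m \<Rightarrow> ('a \<Rightarrow> 'a \<Rightarrow> 'm) \<Rightarrow> bool" where
  "M_distance \<theta> h \<longleftrightarrow> (\<forall>x. h x x = \<theta>) \<and> (\<forall>x y. h x y = h y x)"

definition M_pseudo_metric :: "'m::order \<Rightarrow> ('m \<Rightarrow> 'm \<Rightarrow> 'm) \<Rightarrow> ('a \<Rightarrow> 'a \<Rightarrow> 'm) \<Rightarrow> bool" where
  "M_pseudo_metric \<theta> hM h \<longleftrightarrow> M_distance \<theta> h \<and>
     (\<forall>x x1 x2. hM (h x x1) (h x x2) \<le> h x1 x2)"

definition Hcl :: "('a \<Rightarrow> 'a \<Rightarrow> 'm::order) \<Rightarrow> ('b \<Rightarrow> 'b \<Rightarrow> 'm) \<Rightarrow> ('a \<Rightarrow> 'b) set" where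
  "Hcl hX hY = {f. \<forall>x1 x2. hY (f x1) (f x2) \<le> hX x1 x2}"

definition modulus_of_continuity :: "'m::order \<Rightarrow> ('m \<Rightarrow> 'm \<Rightarrow> 'm) \<Rightarrow> ('m \<Rightarrow> 'm) \<Rightarrow> bool" where
  "modulus_of_continuity \<theta> hM \<omega> \<longleftrightarrow> \<omega> \<theta> = \<theta> \<and> mono \<omega> \<and>
     (\<forall>m1 m2. hM (\<omega> m1) (\<omega> m2) \<le> \<omega> (hM m1 m2))"

definition Homega :: "('m::order \<Rightarrow> 'm) \<Rightarrow> ('t \<Rightarrow> 't \<Rightarrow> 'm) \<Rightarrow> ('z \<Rightarrow> 'z \<Rightarrow> 'm) \<Rightarrow> ('t \<Rightarrow> 'z) set" where
  "Homega \<omega> hT hZ = Hcl (\<lambda>t1 t2. \<omega> (hT t1 t2)) hZ"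

definition monotone_op :: "('t \<Rightarrow> 'm::order) set \<Rightarrow> (('t \<Rightarrow> 'm) \<Rightarrow> 'm) \<Rightarrow> bool" where
  "monotone_op S l \<longleftrightarrow> (\<forall>u\<in>S. \<forall>v\<in>S. (\<forall>\<tau>. u \<tau> \<le> v \<tau>) \<longrightarrow> l u \<le> l v)"

end

theory Submission
  imports Defs
begin

text \<open>The function \<open>\<tau> \<mapsto> h\<^sub>X(f \<tau>, f t)\<close> lies in \<open>H\<^sup>\<omega>(T,M)\<close> and is pointwise dominated by
  \<open>\<tau> \<mapsto> \<omega>(h\<^sub>T(\<tau>, t))\<close>, which lies in \<open>H\<^sup>\<omega>(T,M)\<close> as well; monotonicity of \<open>\<lambda>\<close> then gives
  the bound. For the extremal function \<open>f\<^sub>\<omega>\<^sub>,\<^sub>t\<close> the constant \<open>f\<^sub>\<omega>\<^sub>,\<^sub>t(t)\<close> is \<open>\<phi>\<^sub>X(\<theta>)\<close>, since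
  \<open>\<omega>(h\<^sub>T(t, t)) = \<omega>(\<theta>) = \<theta>\<close>, so both values of \<open>\<Lambda>\<close> factor through \<open>\<phi>\<^sub>Y\<close> and the
  normalisation \<open>h\<^sub>Y(\<phi>\<^sub>Y(m), \<phi>\<^sub>Y(\<theta>)) = m\<close> alone yields equality.\<close>

lemma HomegaD: "f \<in> Homega \<omega> hT hZ \<Longrightarrow> hZ (f t1) (f t2) \<le> \<omega> (hT t1 t2)"
  unfolding Homega_def Hcl_def by blast

lemma HomegaI: "(\<And>t1 t2. hZ (f t1) (f t2) \<le> \<omega> (hT t1 t2)) \<Longrightarrow> f \<in> Homega \<omega> hT hZ"
  unfolding Homega_def Hcl_def by blast

lemma monotone_opD:
  "monotone_op S l \<Longrightarrow> u \<in> S \<Longrightarrow> v \<in> S \<Longrightarrow> (\<And>\<tau>. u \<tau> \<le> v \<tau>) \<Longrightarrow> l u \<le> l v"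
  unfolding monotone_op_def by blast

lemma const_in_Homega:
  assumes "\<forall>m. \<theta> \<le> m" and "M_distance \<theta> hZ"
  shows "(\<lambda>_. z) \<in> Homega \<omega> hT hZ"
  using assms by (intro HomegaI) (simp add: M_distance_def)

lemma distance_to_point_in_Homega:
  assumes "M_pseudo_metric \<theta> hM hX" and "f \<in> Homega \<omega> hT hX"
  shows "(\<lambda>\<tau>. hX (f \<tau>) (f t)) \<in> Homega \<omega> hT hM"
proof (rule HomegaI)
  fix t1 t2
  have "hM (hX (f t1) (f t)) (hX (f t2) (f t)) \<le> hX (f t1) (f t2)"
    using assms(1) unfolding M_pseudo_metric_def M_distance_def by metis
  also have "\<dots> \<le> \<omega> (hT t1 t2)"
    using assms(2) by (rule HomegaD)
  finally show "hM (hX (f t1) (f t)) (hX (f t2) (f t)) \<le> \<omega> (hT t1 t2)" .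
qed

lemma modulus_of_distance_to_point_in_Homega:
  assumes "modulus_of_continuity \<theta> hM \<omega>" and "M_pseudo_metric \<theta> hM hT"
  shows "(\<lambda>\<tau>. \<omega> (hT \<tau> t)) \<in> Homega \<omega> hT hM"
proof (rule HomegaI)
  fix t1 t2
  have "hM (\<omega> (hT t1 t)) (\<omega> (hT t2 t)) \<le> \<omega> (hM (hT t1 t) (hT t2 t))"
    using assms(1) unfolding modulus_of_continuity_def by blast
  also have "hM (hT t1 t) (hT t2 t) \<le> hT t1 t2"
    using assms(2) unfolding M_pseudo_metric_def M_distance_def by metis
  then have "\<omega> (hM (hT t1 t) (hT t2 t)) \<le> \<omega> (hT t1 t2)"
    using assms(1) unfolding modulus_of_continuity_def by (blast dest: monoD)
  finally show "hM (\<omega> (hT t1 t)) (\<omega> (hT t2 t)) \<le> \<omega> (hT t1 t2)" .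
qed

lemma deviation_le_modulus_bound:
  assumes mod: "modulus_of_continuity \<theta> hM \<omega>"
    and hT: "M_pseudo_metric \<theta> hM hT" and hX: "M_pseudo_metric \<theta> hM hX"
    and mono_l: "monotone_op (Homega \<omega> hT hM) l"
    and f: "f \<in> Homega \<omega> hT hX"
    and Lam_f: "hY (\<Lambda> f) (\<Lambda> (\<lambda>_. f t)) \<le> l (\<lambda>\<tau>. hX (f \<tau>) (f t))"
  shows "hY (\<Lambda> f) (\<Lambda> (\<lambda>_. f t)) \<le> l (\<lambda>\<tau>. \<omega> (hT \<tau> t))"
proof -
  note Lam_f
  also have "l (\<lambda>\<tau>. hX (f \<tau>) (f t)) \<le> l (\<lambda>\<tau>. \<omega> (hT \<tau> t))"
    by (rule monotone_opD[OF mono_l distance_to_point_in_Homega[OF hX f]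
          modulus_of_distance_to_point_in_Homega[OF mod hT] HomegaD[OF f]])
  finally show ?thesis .
qed

lemma deviation_of_extremal_function:
  assumes "\<forall>m. \<theta> \<le> m" and "M_distance \<theta> hM"
    and "modulus_of_continuity \<theta> hM \<omega>" and "M_pseudo_metric \<theta> hM hT"
    and "l (\<lambda>_. \<theta>) = \<theta>"
    and "hY (\<phi>Y (l (\<lambda>\<tau>. \<omega> (hT \<tau> t)))) (\<phi>Y \<theta>) = l (\<lambda>\<tau>. \<omega> (hT \<tau> t))"
    and factor: "\<forall>g\<in>Homega \<omega> hT hM. \<Lambda> (\<phi>X \<circ> g) = \<phi>Y (l g)"
  shows "hY (\<Lambda> (\<phi>X \<circ> (\<lambda>\<tau>. \<omega> (hT \<tau> t)))) (\<Lambda> (\<lambda>_. \<phi>X (\<omega> (hT t t))))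
    = l (\<lambda>\<tau>. \<omega> (hT \<tau> t))"
proof -
  have "\<omega> (hT t t) = \<theta>"
    using assms(3,4) unfolding modulus_of_continuity_def M_pseudo_metric_def M_distance_def
    by simp
  then have "(\<lambda>_. \<phi>X (\<omega> (hT t t))) = \<phi>X \<circ> (\<lambda>_. \<theta>)"
    by (simp add: fun_eq_iff)
  then have "\<Lambda> (\<lambda>_. \<phi>X (\<omega> (hT t t))) = \<phi>Y \<theta>"
    using factor const_in_Homega[OF assms(1,2)] assms(5) by metis
  moreover have "\<Lambda> (\<phi>X \<circ> (\<lambda>\<tau>. \<omega> (hT \<tau> t))) = \<phi>Y (l (\<lambda>\<tau>. \<omega> (hT \<tau> t)))"
    using factor modulus_of_distance_to_point_in_Homega[OF assms(3,4)] by blast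
  ultimately show ?thesis
    using assms(6) by simp
qed

theorem corollary2:
  fixes \<theta> :: "'m::order"
    and hM :: "'m \<Rightarrow> 'm \<Rightarrow> 'm"
    and \<omega> :: "'m \<Rightarrow> 'm"
    and hT :: "'t \<Rightarrow> 't \<Rightarrow> 'm"
    and hX :: "'x \<Rightarrow> 'x \<Rightarrow> 'm"
    and hY :: "'y \<Rightarrow> 'y \<Rightarrow> 'm"
    and t :: 't
    and \<Lambda> :: "('t \<Rightarrow> 'x) \<Rightarrow> 'y"
    and l :: "('t \<Rightarrow> 'm) \<Rightarrow> 'm"
  assumes least: "\<forall>m. \<theta> \<le> m"
    and hM: "M_distance \<theta> hM"
    and mod: "modulus_of_continuity \<theta> hM \<omega>"
    and hT: "M_pseudo_metric \<theta> hM hT"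
    and hX: "M_pseudo_metric \<theta> hM hX"
    and hY: "M_distance \<theta> hY"
    and mono_l: "monotone_op (Homega \<omega> hT hM) l"
    and Lam: "\<forall>f\<in>Homega \<omega> hT hX. hY (\<Lambda> f) (\<Lambda> (\<lambda>_. f t)) \<le> l (\<lambda>\<tau>. hX (f \<tau>) (f t))"
  shows "(\<forall>f\<in>Homega \<omega> hT hX. hY (\<Lambda> f) (\<Lambda> (\<lambda>_. f t)) \<le> l (\<lambda>\<tau>. \<omega> (hT \<tau> t)))
    \<and> (\<forall>(\<phi>X :: 'm \<Rightarrow> 'x) (\<phi>Y :: 'm \<Rightarrow> 'y).
          l (\<lambda>_. \<theta>) = \<theta>
          \<and> (\<forall>g\<in>Homega \<omega> hT hM. \<phi>X \<circ> g \<in> Homega \<omega> hT hX)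
          \<and> \<phi>Y \<in> Hcl hM hY
          \<and> hY (\<phi>Y (l (\<lambda>\<tau>. \<omega> (hT \<tau> t)))) (\<phi>Y \<theta>) = l (\<lambda>\<tau>. \<omega> (hT \<tau> t))
          \<and> (\<forall>g\<in>Homega \<omega> hT hM. \<Lambda> (\<phi>X \<circ> g) = \<phi>Y (l g))
        \<longrightarrow> (let f = \<phi>X \<circ> (\<lambda>\<tau>. \<omega> (hT \<tau> t))
             in hY (\<Lambda> f) (\<Lambda> (\<lambda>_. f t)) = l (\<lambda>\<tau>. \<omega> (hT \<tau> t))))"
proof (intro conjI ballI allI impI)
  fix f
  assume "f \<in> Homega \<omega> hT hX"
  with Lam show "hY (\<Lambda> f) (\<Lambda> (\<lambda>_. f t)) \<le> l (\<lambda>\<tau>. \<omega> (hT \<tau> t))"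
    by (blast intro: deviation_le_modulus_bound[OF mod hT hX mono_l])
next
  fix \<phi>X :: "'m \<Rightarrow> 'x" and \<phi>Y :: "'m \<Rightarrow> 'y"
  assume "l (\<lambda>_. \<theta>) = \<theta>
          \<and> (\<forall>g\<in>Homega \<omega> hT hM. \<phi>X \<circ> g \<in> Homega \<omega> hT hX)
          \<and> \<phi>Y \<in> Hcl hM hY
          \<and> hY (\<phi>Y (l (\<lambda>\<tau>. \<omega> (hT \<tau> t)))) (\<phi>Y \<theta>) = l (\<lambda>\<tau>. \<omega> (hT \<tau> t))
          \<and> (\<forall>g\<in>Homega \<omega> hT hM. \<Lambda> (\<phi>X \<circ> g) = \<phi>Y (l g))"
  then show "let f = \<phi>X \<circ> (\<lambda>\<tau>. \<omega> (hT \<tau> t))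
             in hY (\<Lambda> f) (\<Lambda> (\<lambda>_. f t)) = l (\<lambda>\<tau>. \<omega> (hT \<tau> t))"
    using deviation_of_extremal_function[OF least hM mod hT]
    by (auto simp: Let_def)
qed

end
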